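(* Let $P_1,P_2,Q_1,Q_2\in\mathbb{C}[x]$ with $P_1$ nonconstant and $P_1Q_1Q_2=P_2$, and let $t\in\mathbb{C}\setminus\{0\}$. The assignment $u\mapsto Q_1(z-\tfrac12)u$, $v\mapsto Q_2(z+\tfrac12)v$, $z\mapsto z$ defines an algebra homomorphism $\varphi=\varphi_{Q_1,Q_2}:\mathcal{A}_{P_2}\to\mathcal{A}_{P_1}$ commuting with $g_t$, and pullback $T\mapsto T\circ\varphi$ is an injective linear map $\mathcal{C}_{P_1,t}\hookrightarrow\mathcal{C}_{P_2,t}$ satisfying $F_{T\circ\varphi}=F_T$. Moreover, $\mathcal{D}_{P_1,t}$ is exactly the preimage of $\mathcal{D}_{P_2,t}$ under this map, i.e. $T\circ\varphi$ is degenerate if and only if $T$ is.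
   Context: For a nonconstant polynomial $P\in\mathbb{C}[x]$, $\mathcal{A}_P$ denotes the associative unital $\mathbb{C}$-algebra generated by $u,v,z$ subject to $zu-uz=u$, $zv-vz=-v$, $uv=P(z-\tfrac12)$, $vu=P(z+\tfrac12)$. For $t\in\mathbb{C}\setminus\{0\}$, $g_t$ is the automorphism with $g_t(u)=t^{-1}u$, $g_t(v)=tv$, $g_t(z)=z$. A twisted trace on $\mathcal{A}_P$ is a linear $T:\mathcal{A}_P\to\mathbb{C}$ with $T(ab)=T(g_t(b)a)$ for all $a,b$; $\mathcal{C}_{P,t}$ is the space of these. $T$ is degenerate if there is $0\neq a\in\mathcal{A}_P$ with $T(ab)=0$ for all $b$; $\mathcal{D}_{P,t}$ is the set of degenerate twisted traces. The formal Stieltjes transform is $F_T(x)=\sum_{n\ge0}T(z^n)x^{-n-1}$. *)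

theory Defs
  imports "HOL-Library.Function_Algebras" "HOL-Computational_Algebra.Polynomial" "HOL-Computational_Algebra.Formal_Power_Series"
begin

text \<open>Model: A_P is the quotient of the free associative algebra C<u,v,z> by the two-sided
ideal generated by the four defining relations.  Elements of the free algebra are
finitely supported functions from words (lists of generators) to complex numbers.\<close>

datatype gen = U | V | Z

type_synonym felem = "gen list \<Rightarrow> complex"

definition FA :: "felem set" where
  "FA = {f. finite {w. f w \<noteq> 0}}"

definition fmul :: "felem \<Rightarrow> felem \<Rightarrow> felem" where
  "fmul a b = (\<lambda>w. \<Sum>i\<le>length w. a (take i w) * b (drop i w))"

definition fsingle :: "gen list \<Rightarrow> felem" where
  "fsingle w = (\<lambda>w'. if w' = w then 1 else 0)"

definition fone :: felem where
  "fone = fsingle []"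

definition fscale :: "complex \<Rightarrow> felem \<Rightarrow> felem" where
  "fscale c f = (\<lambda>w. c * f w)"

definition polyZ :: "complex poly \<Rightarrow> felem" where
  "polyZ p = (\<lambda>w. if w = replicate (length w) Z then coeff p (length w) else 0)"

definition pshift :: "complex poly \<Rightarrow> complex \<Rightarrow> complex poly" where
  "pshift p c = pcompose p [:c, 1:]"

definition rels :: "complex poly \<Rightarrow> felem set" where
  "rels P = {
     fmul (fsingle [Z]) (fsingle [U]) - fmul (fsingle [U]) (fsingle [Z]) - fsingle [U],
     fmul (fsingle [Z]) (fsingle [V]) - fmul (fsingle [V]) (fsingle [Z]) + fsingle [V],
     fmul (fsingle [U]) (fsingle [V]) - polyZ (pshift P (-1/2)),
     fmul (fsingle [V]) (fsingle [U]) - polyZ (pshift P (1/2))}"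

inductive_set rel_ideal :: "complex poly \<Rightarrow> felem set" for P where
  gen: "r \<in> rels P \<Longrightarrow> a \<in> FA \<Longrightarrow> b \<in> FA \<Longrightarrow> fmul (fmul a r) b \<in> rel_ideal P"
| zero: "(\<lambda>_. 0) \<in> rel_ideal P"
| add: "x \<in> rel_ideal P \<Longrightarrow> y \<in> rel_ideal P \<Longrightarrow> x + y \<in> rel_ideal P"
| scale: "x \<in> rel_ideal P \<Longrightarrow> fscale c x \<in> rel_ideal P"

text \<open>The automorphism g_t (lifted to the free algebra): u \<mapsto> t^-1 u, v \<mapsto> t v, z \<mapsto> z.\<close>
definition gt :: "complex \<Rightarrow> felem \<Rightarrow> felem" where
  "gt t f = (\<lambda>w. t powi (int (count_list w V) - int (count_list w U)) * f w)"

text \<open>A linear functional on the free algebra is given by its values tau on words.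
  A linear functional T on A_P is the same as such a tau whose functional vanishes
  on the ideal.\<close>
definition ev :: "(gen list \<Rightarrow> complex) \<Rightarrow> felem \<Rightarrow> complex" where
  "ev \<tau> f = (\<Sum>w\<in>{w. f w \<noteq> 0}. f w * \<tau> w)"

definition twisted_trace :: "complex poly \<Rightarrow> complex \<Rightarrow> (gen list \<Rightarrow> complex) \<Rightarrow> bool" where
  "twisted_trace P t \<tau> \<longleftrightarrow>
     (\<forall>x\<in>rel_ideal P. ev \<tau> x = 0) \<and>
     (\<forall>a\<in>FA. \<forall>b\<in>FA. ev \<tau> (fmul a b) = ev \<tau> (fmul (gt t b) a))"

definition degenerate :: "complex poly \<Rightarrow> (gen list \<Rightarrow> complex) \<Rightarrow> bool" where
  "degenerate P \<tau> \<longleftrightarrow>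
     (\<exists>a\<in>FA. a \<notin> rel_ideal P \<and> (\<forall>b\<in>FA. ev \<tau> (fmul a b) = 0))"

fun phig :: "complex poly \<Rightarrow> complex poly \<Rightarrow> gen \<Rightarrow> felem" where
  "phig Q1 Q2 U = fmul (polyZ (pshift Q1 (-1/2))) (fsingle [U])"
| "phig Q1 Q2 V = fmul (polyZ (pshift Q2 (1/2))) (fsingle [V])"
| "phig Q1 Q2 Z = fsingle [Z]"

definition phiw :: "complex poly \<Rightarrow> complex poly \<Rightarrow> gen list \<Rightarrow> felem" where
  "phiw Q1 Q2 w = foldr (\<lambda>g acc. fmul (phig Q1 Q2 g) acc) w fone"

definition phi :: "complex poly \<Rightarrow> complex poly \<Rightarrow> felem \<Rightarrow> felem" where
  "phi Q1 Q2 f = (\<lambda>w'. \<Sum>w\<in>{w. f w \<noteq> 0}. f w * phiw Q1 Q2 w w')"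

definition pull :: "complex poly \<Rightarrow> complex poly \<Rightarrow> (gen list \<Rightarrow> complex) \<Rightarrow> (gen list \<Rightarrow> complex)" where
  "pull Q1 Q2 \<tau> = (\<lambda>w. ev \<tau> (phiw Q1 Q2 w))"

text \<open>Formal Stieltjes transform: the n-th coefficient is T(z^n), i.e. the coefficient of x^(-n-1).\<close>
definition stieltjes :: "(gen list \<Rightarrow> complex) \<Rightarrow> complex fps" where
  "stieltjes \<tau> = Abs_fps (\<lambda>n. \<tau> (replicate n Z))"

end

theory Submission
  imports Defs
begin

text \<open>The map \<open>\<phi>\<close> is defined on words and extended linearly, so it is multiplicative, and it
  commutes with \<open>g\<^sub>t\<close> because it preserves the grading by weight \<open>#u - #v\<close>, and \<open>g\<^sub>t\<close> acts
  on weight \<open>k\<close> by the scalar \<open>t\<^sup>-\<^sup>k\<close>. It respects the relations because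
  \<open>\<phi>(u v) = Q\<^sub>1(z - 1/2) u Q\<^sub>2(z + 1/2) v \<equiv> Q\<^sub>1(z - 1/2) Q\<^sub>2(z - 1/2) P\<^sub>1(z - 1/2) = P\<^sub>2(z - 1/2)\<close>,
  and likewise for \<open>v u\<close>. Since \<open>\<phi>\<close> fixes the polynomials in \<open>z\<close>, pulling back a twisted trace
  preserves the moments \<open>T(z\<^sup>n)\<close>, hence the Stieltjes transform.

  Everything else rests on a normal form: every element is congruent to a finite sum
  \<open>\<Sum> p\<^sub>k(z) e\<^sub>k\<close> with \<open>e\<^sub>k = u\<^sup>k\<close> or \<open>v\<^sup>-\<^sup>k\<close>. A twisted trace kills every term of nonzero weight, as
  \<open>[z, w] = weight(w) w\<close> and \<open>g\<^sub>t\<close> fixes \<open>z\<close>; so it is determined by its moments, which gives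
  injectivity. Moreover \<open>T\<close> is degenerate iff its Hankel form \<open>(p, q) \<mapsto> T(p q)\<close> on \<open>\<complex>[z]\<close> is
  degenerate, a condition on the moments alone and hence invariant under pullback. This uses that
  \<open>e\<^sub>k e\<^sub>-\<^sub>k\<close> is a nonzero polynomial in \<open>z\<close> when \<open>P \<noteq> 0\<close>, and that no nonzero polynomial in \<open>z\<close>
  lies in the ideal of relations, as a representation on functions \<open>\<complex> \<rightarrow> \<complex>\<close> shows.\<close>

section \<open>The free algebra\<close>

text \<open>Since \<open>felem\<close> is a function type, unification and \<open>induct\<close> may eta-expand \<open>0\<close> and \<open>a + b\<close>
  into \<open>\<lambda>w. 0\<close> and \<open>\<lambda>w. a w + b w\<close>; these rules fold them back.\<close>

lemma felem_zero_eta [simp]: "(\<lambda>w. 0) = (0 :: felem)"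
  by (simp add: fun_eq_iff)

lemma felem_plus_eta [simp]: "(\<lambda>w. a w + b w) = (a + b :: felem)"
  by (simp add: fun_eq_iff)

definition supp :: "felem \<Rightarrow> gen list set" where
  "supp a = {w. a w \<noteq> 0}"

lemma FA_iff_finite_supp: "a \<in> FA \<longleftrightarrow> finite (supp a)"
  by (simp add: FA_def supp_def)

lemma splits_eq_image: "{(x, y). x @ y = w} = (\<lambda>i. (take i w, drop i w)) ` {..length w}"
proof
  show "{(x, y). x @ y = w} \<subseteq> (\<lambda>i. (take i w, drop i w)) ` {..length w}"
  proof
    fix p assume "p \<in> {(x, y). x @ y = w}"
    then obtain x y where "p = (x, y)" "x @ y = w" by auto
    then show "p \<in> (\<lambda>i. (take i w, drop i w)) ` {..length w}"
      by (intro image_eqI[where x = "length x"]) auto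
  qed
qed auto

lemma finite_splits: "finite {(x, y). x @ y = w}"
  by (simp add: splits_eq_image)

lemma fmul_eq_sum_splits: "fmul a b w = (\<Sum>(x, y)\<in>{(x, y). x @ y = w}. a x * b y)"
proof -
  have "inj_on (\<lambda>i. (take i w, drop i w)) {..length w}"
    unfolding inj_on_def by (metis atMost_iff length_take min.absorb2 prod.inject)
  then show ?thesis
    unfolding fmul_def splits_eq_image by (simp add: sum.reindex o_def)
qed

lemma fmul_assoc: "fmul (fmul a b) c = fmul a (fmul b c)"
proof
  fix w :: "gen list"
  let ?T = "{(x, y, z). x @ y @ z = w}"
  have "fmul (fmul a b) c w
        = (\<Sum>(p, z)\<in>{(p, z). p @ z = w}. \<Sum>(x, y)\<in>{(x, y). x @ y = p}. a x * b y * c z)"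
    unfolding fmul_eq_sum_splits[of _ c] fmul_eq_sum_splits[of a b]
    by (rule sum.cong) (auto simp: sum_distrib_right case_prod_beta)
  also have "\<dots> = (\<Sum>((p, z), (x, y))\<in>(SIGMA q:{(p, z). p @ z = w}. {(x, y). x @ y = fst q}).
                   a x * b y * c z)"
    by (subst sum.Sigma[symmetric]) (auto intro!: finite_splits sum.cong)
  also have "\<dots> = (\<Sum>(x, y, z)\<in>?T. a x * b y * c z)"
    by (rule sum.reindex_bij_witness[where i = "\<lambda>(x, y, z). ((x @ y, z), (x, y))"
          and j = "\<lambda>((p, z), (x, y)). (x, y, z)"]) auto
  finally have left: "fmul (fmul a b) c w = (\<Sum>(x, y, z)\<in>?T. a x * b y * c z)" .
  have "fmul a (fmul b c) w
        = (\<Sum>(x, q)\<in>{(x, q). x @ q = w}. \<Sum>(y, z)\<in>{(y, z). y @ z = q}. a x * b y * c z)"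
    unfolding fmul_eq_sum_splits[of a] fmul_eq_sum_splits[of b c]
    by (rule sum.cong) (auto simp: sum_distrib_left mult.assoc case_prod_beta)
  also have "\<dots> = (\<Sum>((x, q), (y, z))\<in>(SIGMA p:{(x, q). x @ q = w}. {(y, z). y @ z = snd p}).
                   a x * b y * c z)"
    by (subst sum.Sigma[symmetric]) (auto intro!: finite_splits sum.cong)
  also have "\<dots> = (\<Sum>(x, y, z)\<in>?T. a x * b y * c z)"
    by (rule sum.reindex_bij_witness[where i = "\<lambda>(x, y, z). ((x, y @ z), (y, z))"
          and j = "\<lambda>((x, q), (y, z)). (x, y, z)"]) auto
  finally show "fmul (fmul a b) c w = fmul a (fmul b c) w"
    using left by simp
qed

lemma fmul_add_left: "fmul (a + b) c = fmul a c + fmul b c"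
  by (auto simp: fmul_def sum.distrib distrib_right)

lemma fmul_add_right: "fmul a (b + c) = fmul a b + fmul a c"
  by (auto simp: fmul_def sum.distrib distrib_left)

lemma fmul_diff_left: "fmul (a - b) c = fmul a c - fmul b c"
  by (auto simp: fmul_def sum_subtractf left_diff_distrib)

lemma fmul_diff_right: "fmul a (b - c) = fmul a b - fmul a c"
  by (auto simp: fmul_def sum_subtractf right_diff_distrib)

lemma fmul_scale_left: "fmul (fscale k a) c = fscale k (fmul a c)"
  by (auto simp: fmul_def fscale_def sum_distrib_left mult.assoc)

lemma fmul_scale_right: "fmul a (fscale k c) = fscale k (fmul a c)"
  by (auto simp: fmul_def fscale_def sum_distrib_left mult.left_commute)

lemma fmul_zero_left [simp]: "fmul 0 c = 0"
  by (auto simp: fmul_def)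

lemma fmul_zero_right [simp]: "fmul a 0 = 0"
  by (auto simp: fmul_def)

lemma fmul_sum_left: "fmul (\<Sum>i\<in>I. f i) c = (\<Sum>i\<in>I. fmul (f i) c)"
  by (induct I rule: infinite_finite_induct) (simp_all add: fmul_add_left)

lemma fmul_sum_right: "fmul c (\<Sum>i\<in>I. f i) = (\<Sum>i\<in>I. fmul c (f i))"
  by (induct I rule: infinite_finite_induct) (simp_all add: fmul_add_right)

lemma fmul_fsingle: "fmul (fsingle x) (fsingle y) = fsingle (x @ y)"
proof
  fix w
  have "fmul (fsingle x) (fsingle y) w
        = (\<Sum>p\<in>{(x', y'). x' @ y' = w}. if p = (x, y) then 1 else 0)"
    unfolding fmul_eq_sum_splits by (rule sum.cong) (auto simp: fsingle_def split: if_splits)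
  also have "\<dots> = fsingle (x @ y) w"
    by (simp add: sum.delta[OF finite_splits] fsingle_def)
  finally show "fmul (fsingle x) (fsingle y) w = fsingle (x @ y) w" .
qed

lemma fmul_fone_left [simp]: "fmul fone a = a"
proof
  fix w show "fmul fone a w = a w"
    unfolding fmul_def fone_def fsingle_def by (subst sum.remove[of _ 0]) auto
qed

lemma fmul_fone_right [simp]: "fmul a fone = a"
proof
  fix w show "fmul a fone w = a w"
    unfolding fmul_def fone_def fsingle_def by (subst sum.remove[of _ "length w"]) auto
qed

lemma fscale_add_left: "fscale (c + d) a = fscale c a + fscale d a"
  by (auto simp: fscale_def distrib_right)

lemma fscale_zero [simp]: "fscale 0 a = 0"
  by (simp add: fscale_def fun_eq_iff)

lemma fscale_one [simp]: "fscale 1 a = a"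
  by (simp add: fscale_def)

lemma fscale_uminus: "fscale (- c) a = - fscale c a"
  by (auto simp: fscale_def)

lemma fscale_minus_one: "fscale (-1) a = - a"
  by (auto simp: fscale_def)

lemma FA_zero [simp]: "0 \<in> FA"
  by (simp add: FA_def)

lemma FA_add [simp]: "a \<in> FA \<Longrightarrow> b \<in> FA \<Longrightarrow> a + b \<in> FA"
  unfolding FA_iff_finite_supp by (rule finite_subset[of _ "supp a \<union> supp b"]) (auto simp: supp_def)

lemma FA_uminus [simp]: "a \<in> FA \<Longrightarrow> - a \<in> FA"
  by (simp add: FA_def)

lemma FA_diff [simp]: "a \<in> FA \<Longrightarrow> b \<in> FA \<Longrightarrow> a - b \<in> FA"
  using FA_add[of a "- b"] by simp

lemma FA_scale [simp]: "a \<in> FA \<Longrightarrow> fscale c a \<in> FA"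
  unfolding FA_iff_finite_supp by (rule finite_subset[of _ "supp a"]) (auto simp: supp_def fscale_def)

lemma FA_fsingle [simp]: "fsingle w \<in> FA"
  by (simp add: FA_def fsingle_def)

lemma FA_fone [simp]: "fone \<in> FA"
  by (simp add: fone_def)

lemma FA_sum: "(\<And>i. i \<in> I \<Longrightarrow> f i \<in> FA) \<Longrightarrow> sum f I \<in> FA"
  by (induct I rule: infinite_finite_induct) auto

lemma supp_fmul: "supp (fmul a b) \<subseteq> (\<lambda>(x, y). x @ y) ` (supp a \<times> supp b)"
proof
  fix w assume "w \<in> supp (fmul a b)"
  then have "(\<Sum>(x, y)\<in>{(x, y). x @ y = w}. a x * b y) \<noteq> 0"
    by (simp add: supp_def fmul_eq_sum_splits)
  then obtain p where "p \<in> {(x, y). x @ y = w}" "(case p of (x, y) \<Rightarrow> a x * b y) \<noteq> 0"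
    by (meson sum.neutral)
  then obtain x y where "x @ y = w" "a x * b y \<noteq> 0"
    by auto
  then show "w \<in> (\<lambda>(x, y). x @ y) ` (supp a \<times> supp b)"
    by (force simp: supp_def)
qed

lemma FA_fmul [simp]: "a \<in> FA \<Longrightarrow> b \<in> FA \<Longrightarrow> fmul a b \<in> FA"
  unfolding FA_iff_finite_supp by (rule finite_subset[OF supp_fmul]) auto

lemma FA_induct [consumes 1, case_names zero step]:
  assumes "a \<in> FA" and "P 0"
    and step: "\<And>a c w. a \<in> FA \<Longrightarrow> P a \<Longrightarrow> P (a + fscale c (fsingle w))"
  shows "P a"
proof -
  have "supp a = S \<Longrightarrow> P a" if "finite S" for S a
    using that
  proof (induct S arbitrary: a rule: finite_induct)
    case empty
    then have "a = 0" by (auto simp: supp_def)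
    then show ?case using \<open>P 0\<close> by simp
  next
    case (insert x F)
    have "supp (a(x := 0)) = F"
      using insert by (auto simp: supp_def)
    moreover have "a = a(x := 0) + fscale (a x) (fsingle x)"
      by (auto simp: fscale_def fsingle_def)
    ultimately show ?case
      using insert step[of "a(x := 0)"] by (metis FA_iff_finite_supp)
  qed
  then show ?thesis
    using \<open>a \<in> FA\<close> by (simp add: FA_iff_finite_supp)
qed

lemma sum_fun_apply: "(\<Sum>i\<in>I. f i) w = (\<Sum>i\<in>I. (f i :: felem) w)"
  by (induct I rule: infinite_finite_induct) auto

lemma fscale_sum: "fscale c (\<Sum>i\<in>I. f i) = (\<Sum>i\<in>I. fscale c (f i))"
  by (rule ext) (simp add: fscale_def sum_fun_apply sum_distrib_left)

section \<open>Linear functionals on the free algebra\<close>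

lemma ev_eq_sum_supp: "ev \<tau> a = (\<Sum>w\<in>supp a. a w * \<tau> w)"
  by (simp add: ev_def supp_def)

lemma ev_eq_sum_superset:
  assumes "finite S" "supp a \<subseteq> S"
  shows "ev \<tau> a = (\<Sum>w\<in>S. a w * \<tau> w)"
  unfolding ev_eq_sum_supp using assms by (intro sum.mono_neutral_left) (auto simp: supp_def)

lemma ev_add: "a \<in> FA \<Longrightarrow> b \<in> FA \<Longrightarrow> ev \<tau> (a + b) = ev \<tau> a + ev \<tau> b"
proof -
  assume "a \<in> FA" "b \<in> FA"
  then have fin: "finite (supp a \<union> supp b)" by (simp add: FA_iff_finite_supp)
  have "supp (a + b) \<subseteq> supp a \<union> supp b" by (auto simp: supp_def)
  then show ?thesis by (simp add: ev_eq_sum_superset[OF fin] distrib_right sum.distrib)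
qed

lemma ev_diff: "a \<in> FA \<Longrightarrow> b \<in> FA \<Longrightarrow> ev \<tau> (a - b) = ev \<tau> a - ev \<tau> b"
proof -
  assume "a \<in> FA" "b \<in> FA"
  then have fin: "finite (supp a \<union> supp b)" by (simp add: FA_iff_finite_supp)
  have "supp (a - b) \<subseteq> supp a \<union> supp b" by (auto simp: supp_def)
  then show ?thesis by (simp add: ev_eq_sum_superset[OF fin] left_diff_distrib sum_subtractf)
qed

lemma ev_scale: "a \<in> FA \<Longrightarrow> ev \<tau> (fscale c a) = c * ev \<tau> a"
proof -
  assume "a \<in> FA"
  then have fin: "finite (supp a)" by (simp add: FA_iff_finite_supp)
  have "supp (fscale c a) \<subseteq> supp a" by (auto simp: supp_def fscale_def)
  then show ?thesis
    by (simp add: ev_eq_sum_superset[OF fin] sum_distrib_left fscale_def mult.assoc)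
qed

lemma ev_zero [simp]: "ev \<tau> 0 = 0"
  by (simp add: ev_def)

lemma ev_fsingle [simp]: "ev \<tau> (fsingle w) = \<tau> w"
  using ev_eq_sum_superset[of "{w}" "fsingle w"] by (simp add: supp_def fsingle_def)

lemma ev_sum: "(\<And>i. i \<in> I \<Longrightarrow> f i \<in> FA) \<Longrightarrow> ev \<tau> (\<Sum>i\<in>I. f i) = (\<Sum>i\<in>I. ev \<tau> (f i))"
proof (induct I rule: infinite_finite_induct)
  case (insert x I)
  then show ?case by (simp add: ev_add FA_sum)
qed simp_all

lemma ev_functional_add_scale: "ev (\<lambda>w. \<tau> w + c * \<sigma> w) a = ev \<tau> a + c * ev \<sigma> a"
  by (simp add: ev_def distrib_left sum.distrib sum_distrib_left algebra_simps)

lemma ev_functional_sum: "ev (\<lambda>w. \<Sum>i\<in>I. \<tau> i w) a = (\<Sum>i\<in>I. ev (\<tau> i) a)"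
  unfolding ev_def by (simp add: sum_distrib_left sum.swap[of _ I])

lemma ev_functional_scale: "ev (\<lambda>w. c * \<tau> w) a = c * ev \<tau> a"
  by (simp add: ev_def sum_distrib_left mult.left_commute)

lemma ev_functional_scale_right: "ev (\<lambda>w. \<tau> w * c) a = ev \<tau> a * c"
  by (simp add: ev_def sum_distrib_right mult.assoc)

lemma ev_fsingle_functional: "a \<in> FA \<Longrightarrow> ev (\<lambda>w. fsingle w v) a = a v"
  using ev_eq_sum_superset[of "insert v (supp a)" a "\<lambda>w. fsingle w v"]
  by (auto simp: FA_iff_finite_supp fsingle_def supp_def if_distrib sum.delta' cong: if_cong)

lemma ev_fmul:
  assumes "a \<in> FA" "b \<in> FA"
  shows "ev \<tau> (fmul a b) = ev (\<lambda>x. ev (\<lambda>y. \<tau> (x @ y)) b) a"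
proof -
  let ?A = "supp a" and ?B = "supp b" and ?cat = "\<lambda>(x :: gen list, y). x @ y"
  have fin: "finite (?A \<times> ?B)"
    using assms by (simp add: FA_iff_finite_supp)
  have "ev \<tau> (fmul a b) = (\<Sum>w\<in>?cat ` (?A \<times> ?B). fmul a b w * \<tau> w)"
    using fin by (intro ev_eq_sum_superset supp_fmul) simp
  also have "\<dots> = (\<Sum>w\<in>?cat ` (?A \<times> ?B). \<Sum>p\<in>{p\<in>?A \<times> ?B. ?cat p = w}. a (fst p) * b (snd p) * \<tau> (?cat p))"
  proof (rule sum.cong[OF refl])
    fix w
    have "fmul a b w * \<tau> w = (\<Sum>p\<in>{(x, y). x @ y = w}. a (fst p) * b (snd p) * \<tau> w)"
      unfolding fmul_eq_sum_splits by (simp add: sum_distrib_right case_prod_beta)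
    also have "\<dots> = (\<Sum>p\<in>{p\<in>?A \<times> ?B. ?cat p = w}. a (fst p) * b (snd p) * \<tau> (?cat p))"
      by (rule sum.mono_neutral_cong_right[OF finite_splits]) (auto simp: supp_def)
    finally show "fmul a b w * \<tau> w = \<dots>" .
  qed
  also have "\<dots> = (\<Sum>p\<in>?A \<times> ?B. a (fst p) * b (snd p) * \<tau> (?cat p))"
    by (rule sum.image_gen[OF fin, symmetric])
  also have "\<dots> = ev (\<lambda>x. ev (\<lambda>y. \<tau> (x @ y)) b) a"
    by (simp add: ev_eq_sum_supp sum.cartesian_product sum_distrib_left mult.assoc case_prod_beta)
  finally show ?thesis .
qed

section \<open>Polynomials in the generator z\<close>

lemma replicate_length_iff_set_subset: "w = replicate (length w) x \<longleftrightarrow> set w \<subseteq> {x}"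
proof
  assume "w = replicate (length w) x"
  then have "set w = set (replicate (length w) x)" by simp
  then show "set w \<subseteq> {x}" by auto
next
  assume "set w \<subseteq> {x}"
  then show "w = replicate (length w) x" by (intro replicate_length_same[symmetric]) auto
qed

lemma polyZ_eq: "polyZ p w = (if set w \<subseteq> {Z} then coeff p (length w) else 0)"
  by (simp add: polyZ_def replicate_length_iff_set_subset)

lemma polyZ_replicate: "polyZ p (replicate n Z) = coeff p n"
  by (simp add: polyZ_def)

lemma supp_polyZ: "supp (polyZ p) \<subseteq> (\<lambda>n. replicate n Z) ` {..degree p}"
proof
  fix w assume "w \<in> supp (polyZ p)"
  then have "w = replicate (length w) Z" "coeff p (length w) \<noteq> 0"
    by (auto simp: supp_def polyZ_def split: if_splits)
  then show "w \<in> (\<lambda>n. replicate n Z) ` {..degree p}"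
    by (metis atMost_iff image_eqI le_degree)
qed

lemma FA_polyZ [simp]: "polyZ p \<in> FA"
  unfolding FA_iff_finite_supp by (rule finite_subset[OF supp_polyZ]) simp

lemma ev_polyZ: "ev \<tau> (polyZ p) = (\<Sum>n\<le>degree p. coeff p n * \<tau> (replicate n Z))"
proof -
  have "inj_on (\<lambda>n. replicate n Z) {..degree p}"
    by (simp add: inj_on_def)
  then show ?thesis
    by (simp add: ev_eq_sum_superset[OF _ supp_polyZ] sum.reindex polyZ_replicate)
qed

lemma polyZ_0 [simp]: "polyZ 0 = 0"
  by (auto simp: polyZ_def)

lemma polyZ_add: "polyZ (p + q) = polyZ p + polyZ q"
  by (auto simp: polyZ_def)

lemma polyZ_smult: "polyZ (smult c p) = fscale c (polyZ p)"
  by (auto simp: polyZ_def fscale_def)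

lemma polyZ_one: "polyZ 1 = fone"
  by (rule ext) (simp add: polyZ_eq fone_def fsingle_def)

lemma polyZ_X: "polyZ [:0, 1:] = fsingle [Z]"
proof
  fix w :: "gen list"
  show "polyZ [:0, 1:] w = fsingle [Z] w"
  proof (cases "set w \<subseteq> {Z}")
    case True
    then have "w = replicate (length w) Z"
      by (simp add: replicate_length_iff_set_subset)
    then show ?thesis
      by (cases w) (auto simp: polyZ_eq fsingle_def coeff_pCons split: nat.splits)
  qed (auto simp: polyZ_eq fsingle_def)
qed

lemma polyZ_linear: "polyZ [:c, 1:] = fsingle [Z] + fscale c fone"
proof -
  have "[:c, 1:] = [:0, 1:] + smult c 1" by simp
  then show ?thesis by (simp only: polyZ_add polyZ_smult polyZ_one polyZ_X)
qed

lemma polyZ_mult: "fmul (polyZ p) (polyZ q) = polyZ (p * q)"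
proof
  fix w :: "gen list"
  have "set w \<subseteq> {Z} \<longleftrightarrow> set (take i w) \<subseteq> {Z} \<and> set (drop i w) \<subseteq> {Z}" for i
    by (metis append_take_drop_id le_sup_iff set_append)
  then show "fmul (polyZ p) (polyZ q) w = polyZ (p * q) w"
    by (cases "set w \<subseteq> {Z}") (auto simp: fmul_def polyZ_eq coeff_mult intro!: sum.neutral)
qed

lemma polyZ_pCons: "polyZ (pCons c q) = fscale c fone + fmul (fsingle [Z]) (polyZ q)"
proof -
  have "pCons c q = smult c 1 + [:0, 1:] * q" by simp
  then show ?thesis by (simp only: polyZ_add polyZ_smult polyZ_one polyZ_mult[symmetric] polyZ_X)
qed

lemma fmul_fsingle_Z_polyZ: "fmul (fsingle [Z]) (polyZ p) = fmul (polyZ p) (fsingle [Z])"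
  by (simp add: polyZ_X[symmetric] polyZ_mult mult.commute)

section \<open>The ideal of relations\<close>

lemma rels_FA: "r \<in> rels P \<Longrightarrow> r \<in> FA"
  unfolding rels_def by auto

lemma rel_ideal_zero [simp]: "0 \<in> rel_ideal P"
  using rel_ideal.zero by simp

lemma rel_ideal_induct [consumes 1, case_names gen zero add scale]:
  assumes "x \<in> rel_ideal P"
    and "\<And>r a b. r \<in> rels P \<Longrightarrow> a \<in> FA \<Longrightarrow> b \<in> FA \<Longrightarrow> Q (fmul (fmul a r) b)"
    and "Q 0"
    and "\<And>x y. x \<in> rel_ideal P \<Longrightarrow> Q x \<Longrightarrow> y \<in> rel_ideal P \<Longrightarrow> Q y \<Longrightarrow> Q (x + y)"
    and "\<And>x c. x \<in> rel_ideal P \<Longrightarrow> Q x \<Longrightarrow> Q (fscale c x)"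
  shows "Q x"
  using assms(1)
proof (induct rule: rel_ideal.induct)
  case zero
  show ?case using \<open>Q 0\<close> by simp
qed (use assms(2,4,5) in blast)+

lemma rel_ideal_FA: "x \<in> rel_ideal P \<Longrightarrow> x \<in> FA"
  by (induct rule: rel_ideal_induct) (simp_all add: rels_FA)

lemma rel_ideal_uminus: "x \<in> rel_ideal P \<Longrightarrow> - x \<in> rel_ideal P"
  using rel_ideal.scale[of x P "-1"] by (simp add: fscale_minus_one)

lemma rel_ideal_diff: "x \<in> rel_ideal P \<Longrightarrow> y \<in> rel_ideal P \<Longrightarrow> x - y \<in> rel_ideal P"
  using rel_ideal.add[OF _ rel_ideal_uminus] by (metis diff_conv_add_uminus)

lemma rel_ideal_fmul_left:
  assumes "x \<in> rel_ideal P" "c \<in> FA"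
  shows "fmul c x \<in> rel_ideal P"
  using assms(1)
proof (induct rule: rel_ideal_induct)
  case (gen r a b)
  then have "fmul (fmul (fmul c a) r) b \<in> rel_ideal P" using assms(2) by (intro rel_ideal.gen) auto
  then show ?case by (simp add: fmul_assoc)
next
  case zero
  then show ?case by simp
next
  case (add x y)
  then show ?case by (simp add: fmul_add_right rel_ideal.add)
next
  case (scale x d)
  then show ?case by (simp add: fmul_scale_right rel_ideal.scale)
qed

lemma rel_ideal_fmul_right:
  assumes "x \<in> rel_ideal P" "c \<in> FA"
  shows "fmul x c \<in> rel_ideal P"
  using assms(1)
proof (induct rule: rel_ideal_induct)
  case (gen r a b)
  then have "fmul (fmul a r) (fmul b c) \<in> rel_ideal P" using assms(2) by (intro rel_ideal.gen) auto
  then show ?case by (simp add: fmul_assoc)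
next
  case zero
  then show ?case by simp
next
  case (add x y)
  then show ?case by (simp add: fmul_add_left rel_ideal.add)
next
  case (scale x d)
  then show ?case by (simp add: fmul_scale_left rel_ideal.scale)
qed

lemma rels_subset_rel_ideal: "r \<in> rels P \<Longrightarrow> r \<in> rel_ideal P"
  using rel_ideal.gen[of r P fone fone] by simp

definition rel_cong :: "complex poly \<Rightarrow> felem \<Rightarrow> felem \<Rightarrow> bool" where
  "rel_cong P a b \<longleftrightarrow> a - b \<in> rel_ideal P"

lemma rel_cong_refl [simp]: "rel_cong P a a"
  by (simp add: rel_cong_def)

lemma rel_cong_trans [trans]: "rel_cong P a b \<Longrightarrow> rel_cong P b c \<Longrightarrow> rel_cong P a c"
  unfolding rel_cong_def using rel_ideal.add by fastforce

text \<open>Without these, \<open>also\<close> would chain \<open>=\<close> with \<open>rel_cong\<close> by the generic substitution rules,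
  whose higher-order unification does not terminate in practice on the large terms below.\<close>

lemma rel_cong_eq_trans [trans]: "rel_cong P a b \<Longrightarrow> b = c \<Longrightarrow> rel_cong P a c"
  by simp

lemma eq_rel_cong_trans [trans]: "a = b \<Longrightarrow> rel_cong P b c \<Longrightarrow> rel_cong P a c"
  by simp

lemma rel_cong_add: "rel_cong P a b \<Longrightarrow> rel_cong P c d \<Longrightarrow> rel_cong P (a + c) (b + d)"
  unfolding rel_cong_def using rel_ideal.add by (fastforce simp: algebra_simps)

lemma rel_cong_diff: "rel_cong P a b \<Longrightarrow> rel_cong P c d \<Longrightarrow> rel_cong P (a - c) (b - d)"
  unfolding rel_cong_def using rel_ideal_diff by (fastforce simp: algebra_simps)

lemma rel_cong_scale: "rel_cong P a b \<Longrightarrow> rel_cong P (fscale c a) (fscale c b)"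
  unfolding rel_cong_def using rel_ideal.scale[of "a - b" P c]
  by (simp add: fscale_def fun_diff_def right_diff_distrib)

lemma rel_cong_fmul_left: "rel_cong P a b \<Longrightarrow> c \<in> FA \<Longrightarrow> rel_cong P (fmul c a) (fmul c b)"
  unfolding rel_cong_def using rel_ideal_fmul_left by (simp add: fmul_diff_right[symmetric])

lemma rel_cong_fmul_right: "rel_cong P a b \<Longrightarrow> c \<in> FA \<Longrightarrow> rel_cong P (fmul a c) (fmul b c)"
  unfolding rel_cong_def using rel_ideal_fmul_right by (simp add: fmul_diff_left[symmetric])

lemma ev_rel_cong:
  assumes "rel_cong P a b" "a \<in> FA" "b \<in> FA" "\<forall>x\<in>rel_ideal P. ev \<tau> x = 0"
  shows "ev \<tau> a = ev \<tau> b"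
  using assms ev_diff[of a b \<tau>] by (simp add: rel_cong_def)

lemma rel_cong_Z_U:
  "rel_cong P (fmul (fsingle [Z]) (fsingle [U]) - fmul (fsingle [U]) (fsingle [Z])) (fsingle [U])"
  unfolding rel_cong_def by (rule rels_subset_rel_ideal) (simp add: rels_def)

lemma rel_cong_Z_V:
  "rel_cong P (fmul (fsingle [Z]) (fsingle [V]) - fmul (fsingle [V]) (fsingle [Z])) (- fsingle [V])"
  unfolding rel_cong_def by (rule rels_subset_rel_ideal) (simp add: rels_def)

lemma rel_cong_U_V: "rel_cong P (fmul (fsingle [U]) (fsingle [V])) (polyZ (pshift P (-1/2)))"
  unfolding rel_cong_def by (rule rels_subset_rel_ideal) (simp add: rels_def)

lemma rel_cong_V_U: "rel_cong P (fmul (fsingle [V]) (fsingle [U])) (polyZ (pshift P (1/2)))"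
  unfolding rel_cong_def by (rule rels_subset_rel_ideal) (simp add: rels_def)

section \<open>Weight grading and commutation with z\<close>

definition weight :: "gen list \<Rightarrow> int" where
  "weight w = int (count_list w U) - int (count_list w V)"

lemma weight_append [simp]: "weight (x @ y) = weight x + weight y"
  by (simp add: weight_def)

lemma weight_Cons: "weight (g # w) = weight [g] + weight w"
  using weight_append[of "[g]" w] by simp

lemma weight_replicate [simp]:
  "weight (replicate n Z) = 0" "weight (replicate n U) = int n" "weight (replicate n V) = - int n"
  by (induct n) (simp_all add: weight_def)

lemma gt_eq_weight: "gt t a = (\<lambda>w. t powi (- weight w) * a w)"
  by (simp add: gt_def weight_def)

definition homogeneous :: "int \<Rightarrow> felem \<Rightarrow> bool" where
  "homogeneous k a \<longleftrightarrow> (\<forall>w. a w \<noteq> 0 \<longrightarrow> weight w = k)"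

lemma homogeneous_fsingle: "homogeneous (weight w) (fsingle w)"
  by (simp add: homogeneous_def fsingle_def)

lemma homogeneous_polyZ: "homogeneous 0 (polyZ p)"
  unfolding homogeneous_def polyZ_def by (metis weight_replicate(1))

lemma homogeneous_fmul:
  assumes "homogeneous k a" "homogeneous l b"
  shows "homogeneous (k + l) (fmul a b)"
  unfolding homogeneous_def
proof (intro allI impI)
  fix w assume "fmul a b w \<noteq> 0"
  then obtain x y where "w = x @ y" "a x \<noteq> 0" "b y \<noteq> 0"
    using supp_fmul[of a b] by (force simp: supp_def)
  with assms show "weight w = k + l"
    by (simp add: homogeneous_def)
qed

lemma FA_gt: "a \<in> FA \<Longrightarrow> gt t a \<in> FA"
  unfolding FA_iff_finite_supp by (rule finite_subset[of _ "supp a"]) (auto simp: supp_def gt_def)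

lemma gt_homogeneous: "homogeneous k a \<Longrightarrow> gt t a = fscale (t powi (- k)) a"
  by (rule ext) (auto simp: gt_eq_weight fscale_def homogeneous_def)

lemma rel_cong_Z_commutator_gen:
  "rel_cong P (fmul (fsingle [Z]) (fsingle [g]) - fmul (fsingle [g]) (fsingle [Z]))
     (fscale (of_int (weight [g])) (fsingle [g]))"
  using rel_cong_Z_U[of P] rel_cong_Z_V[of P]
  by (cases g) (simp_all add: weight_def fscale_minus_one)

lemma rel_cong_Z_commutator:
  "rel_cong P (fmul (fsingle [Z]) (fsingle w) - fmul (fsingle w) (fsingle [Z]))
     (fscale (of_int (weight w)) (fsingle w))"
proof (induct w)
  case Nil
  then show ?case by (simp add: weight_def fone_def[symmetric])
next
  case (Cons g w)
  let ?z = "fsingle [Z]" and ?g = "fsingle [g]" and ?w = "fsingle w"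
  have gw: "fsingle (g # w) = fmul ?g ?w"
    by (simp add: fmul_fsingle)
  have "fmul ?z (fsingle (g # w)) - fmul (fsingle (g # w)) ?z
        = fmul (fmul ?z ?g - fmul ?g ?z) ?w + fmul ?g (fmul ?z ?w - fmul ?w ?z)"
    unfolding gw by (simp only: fmul_diff_left fmul_diff_right fmul_assoc) simp
  also have "rel_cong P \<dots> (fmul (fscale (of_int (weight [g])) ?g) ?w + fmul ?g (fscale (of_int (weight w)) ?w))"
    by (intro rel_cong_add rel_cong_fmul_left rel_cong_fmul_right Cons rel_cong_Z_commutator_gen) simp_all
  also have "\<dots> = fscale (of_int (weight (g # w))) (fsingle (g # w))"
    unfolding gw weight_Cons[of g w] by (simp add: fmul_scale_left fmul_scale_right fscale_add_left)
  finally show ?case .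
qed

lemma rel_cong_fmul_polyZ_eigen:
  assumes "x \<in> FA"
    and eigen: "rel_cong P (fmul (fsingle [Z]) x - fmul x (fsingle [Z])) (fscale k x)"
  shows "rel_cong P (fmul x (polyZ p)) (fmul (polyZ (pcompose p [:-k, 1:])) x)"
proof (induct p rule: pCons_induct)
  case (pCons c q)
  let ?z = "fsingle [Z]" and ?q = "pcompose q [:-k, 1:]"
  have "fmul x ?z - (fmul ?z x - fscale k x) = - (fmul ?z x - fmul x ?z - fscale k x)"
    by (simp add: algebra_simps)
  then have xz: "rel_cong P (fmul x ?z) (fmul ?z x - fscale k x)"
    using eigen rel_ideal_uminus unfolding rel_cong_def by metis
  have "fmul x (polyZ (pCons c q)) = fscale c x + fmul (fmul x ?z) (polyZ q)"
    by (simp add: polyZ_pCons fmul_add_right fmul_scale_right fmul_assoc)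
  also have "rel_cong P \<dots> (fscale c x + fmul (fmul ?z x - fscale k x) (polyZ q))"
    using xz by (intro rel_cong_add rel_cong_fmul_right) simp_all
  also have "\<dots> = fscale c x + (fmul ?z (fmul x (polyZ q)) - fscale k (fmul x (polyZ q)))"
    by (simp add: fmul_diff_left fmul_scale_left fmul_assoc)
  also have "rel_cong P \<dots> (fscale c x + (fmul ?z (fmul (polyZ ?q) x) - fscale k (fmul (polyZ ?q) x)))"
    using pCons(2) \<open>x \<in> FA\<close>
    by (intro rel_cong_add rel_cong_diff rel_cong_scale rel_cong_fmul_left) simp_all
  also have "\<dots> = fmul (polyZ (pcompose (pCons c q) [:-k, 1:])) x"
  proof -
    have "pcompose (pCons c q) [:-k, 1:] = smult c 1 + [:-k, 1:] * ?q"
      by (simp add: pcompose_pCons)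
    then have "polyZ (pcompose (pCons c q) [:-k, 1:])
               = fscale c fone + fmul (?z + fscale (-k) fone) (polyZ ?q)"
      by (simp only: polyZ_add polyZ_smult polyZ_one polyZ_mult[symmetric] polyZ_linear)
    then show ?thesis
      by (simp add: fmul_add_left fmul_diff_left fmul_scale_left fmul_assoc fscale_uminus)
  qed
  finally show ?case .
qed simp

lemma rel_cong_fsingle_polyZ:
  "rel_cong P (fmul (fsingle w) (polyZ p)) (fmul (polyZ (pcompose p [:- of_int (weight w), 1:])) (fsingle w))"
  by (rule rel_cong_fmul_polyZ_eigen[OF FA_fsingle rel_cong_Z_commutator])

section \<open>A faithful representation of the polynomials in z\<close>

fun gen_action :: "complex poly \<Rightarrow> gen \<Rightarrow> (complex \<Rightarrow> complex) \<Rightarrow> complex \<Rightarrow> complex" where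
  "gen_action P Z h = (\<lambda>s. s * h s)"
| "gen_action P U h = (\<lambda>s. poly P (s - 1/2) * h (s - 1))"
| "gen_action P V h = (\<lambda>s. h (s + 1))"

definition word_action :: "complex poly \<Rightarrow> gen list \<Rightarrow> (complex \<Rightarrow> complex) \<Rightarrow> complex \<Rightarrow> complex" where
  "word_action P w = foldr (gen_action P) w"

definition action :: "complex poly \<Rightarrow> felem \<Rightarrow> (complex \<Rightarrow> complex) \<Rightarrow> complex \<Rightarrow> complex" where
  "action P a h s = ev (\<lambda>w. word_action P w h s) a"

lemma word_action_append: "word_action P (x @ y) h = word_action P x (word_action P y h)"
  by (simp add: word_action_def)

lemma word_action_linear:
  "word_action P w (\<lambda>s. \<Sum>i\<in>I. c i * h i s) = (\<lambda>s. \<Sum>i\<in>I. c i * word_action P w (h i) s)"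
proof (induct w)
  case (Cons g w)
  then show ?case
    by (cases g) (simp_all add: word_action_def sum_distrib_left mult.left_commute)
qed (simp add: word_action_def)

lemma action_fsingle [simp]: "action P (fsingle w) h = word_action P w h"
  by (simp add: action_def fun_eq_iff)

lemma action_add: "a \<in> FA \<Longrightarrow> b \<in> FA \<Longrightarrow> action P (a + b) h = (\<lambda>s. action P a h s + action P b h s)"
  by (simp add: action_def ev_add fun_eq_iff)

lemma action_diff: "a \<in> FA \<Longrightarrow> b \<in> FA \<Longrightarrow> action P (a - b) h = (\<lambda>s. action P a h s - action P b h s)"
  by (simp add: action_def ev_diff fun_eq_iff)

lemma action_scale: "a \<in> FA \<Longrightarrow> action P (fscale c a) h = (\<lambda>s. c * action P a h s)"
  by (simp add: action_def ev_scale fun_eq_iff)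

lemma action_fmul:
  assumes "a \<in> FA" "b \<in> FA"
  shows "action P (fmul a b) h = action P a (action P b h)"
proof
  fix s
  have "action P b h = (\<lambda>s. \<Sum>y\<in>supp b. b y * word_action P y h s)"
    by (simp add: action_def ev_eq_sum_supp fun_eq_iff)
  then have "word_action P x (action P b h) s = ev (\<lambda>y. word_action P x (word_action P y h) s) b" for x
    by (simp add: word_action_linear ev_eq_sum_supp)
  then show "action P (fmul a b) h s = action P a (action P b h) s"
    by (simp add: action_def ev_fmul[OF assms] word_action_append)
qed

lemma action_polyZ: "action P (polyZ p) h = (\<lambda>s. poly p s * h s)"
proof -
  have "word_action P (replicate n Z) h = (\<lambda>s. s ^ n * h s)" for n
    by (induct n) (simp_all add: word_action_def mult.assoc)
  then show ?thesis
    by (simp add: action_def ev_polyZ poly_altdef sum_distrib_right mult.assoc fun_eq_iff)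
qed

lemma action_rels: "r \<in> rels P \<Longrightarrow> action P r h = (\<lambda>s. 0)"
  unfolding rels_def
  by (elim insertE emptyE; hypsubst;
      simp add: action_add action_diff action_fmul action_polyZ word_action_def pshift_def
        poly_pcompose algebra_simps)

lemma action_rel_ideal: "x \<in> rel_ideal P \<Longrightarrow> action P x h = (\<lambda>s. 0)"
proof (induct arbitrary: h rule: rel_ideal_induct)
  case (gen r a b)
  then have "action P (fmul (fmul a r) b) h = action P a (action P r (action P b h))"
    by (simp add: action_fmul rels_FA)
  also have "\<dots> = action P a (\<lambda>s. 0)"
    using gen by (simp add: action_rels)
  also have "\<dots> = (\<lambda>s. 0)"
    using word_action_linear[where I = "{}"] by (simp add: action_def ev_eq_sum_supp fun_eq_iff)
  finally show ?case .
next
  case (add x y)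
  then show ?case by (simp add: action_add rel_ideal_FA)
next
  case (scale x c)
  then show ?case by (simp add: action_scale rel_ideal_FA)
qed (simp add: action_def fun_eq_iff)

lemma polyZ_in_rel_ideal_iff: "polyZ p \<in> rel_ideal P \<longleftrightarrow> p = 0"
proof
  assume "polyZ p \<in> rel_ideal P"
  then have "action P (polyZ p) (\<lambda>_. 1) = (\<lambda>s. 0)" by (rule action_rel_ideal)
  then show "p = 0"
    by (simp add: action_polyZ fun_eq_iff poly_all_0_iff_0)
qed simp

section \<open>Normal forms\<close>

definition std_word :: "int \<Rightarrow> gen list" where
  "std_word k = (if 0 \<le> k then replicate (nat k) U else replicate (nat (- k)) V)"

definition nf_term :: "complex poly \<Rightarrow> int \<Rightarrow> felem" where
  "nf_term p k = fmul (polyZ p) (fsingle (std_word k))"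

definition normal_forms :: "felem set" where
  "normal_forms = {(\<Sum>k\<in>S. nf_term (c k) k) | c S. finite S}"

lemma weight_std_word [simp]: "weight (std_word k) = k"
  by (simp add: std_word_def)

lemma std_word_0 [simp]: "std_word 0 = []"
  by (simp add: std_word_def)

lemma FA_nf_term [simp]: "nf_term p k \<in> FA"
  by (simp add: nf_term_def)

lemma homogeneous_nf_term: "homogeneous k (nf_term p k)"
proof -
  have "homogeneous (0 + weight (std_word k)) (nf_term p k)"
    unfolding nf_term_def by (intro homogeneous_fmul homogeneous_polyZ homogeneous_fsingle)
  then show ?thesis by simp
qed

lemma nf_term_0 [simp]: "nf_term 0 k = 0"
  by (simp add: nf_term_def)

lemma nf_term_add: "nf_term (p + q) k = nf_term p k + nf_term q k"
  by (simp add: nf_term_def polyZ_add fmul_add_left)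

lemma nf_term_smult: "nf_term (smult c p) k = fscale c (nf_term p k)"
  by (simp add: nf_term_def polyZ_smult fmul_scale_left)

lemma polyZ_fmul_nf_term: "fmul (polyZ q) (nf_term p k) = nf_term (q * p) k"
  by (simp add: nf_term_def polyZ_mult flip: fmul_assoc)

lemma nf_term_weight_0: "nf_term p 0 = polyZ p"
  by (simp add: nf_term_def fone_def[symmetric])

lemma normal_formsI: "finite S \<Longrightarrow> (\<Sum>k\<in>S. nf_term (c k) k) \<in> normal_forms"
  unfolding normal_forms_def by blast

lemma nf_term_in_normal_forms: "nf_term p k \<in> normal_forms"
  using normal_formsI[of "{k}" "\<lambda>_. p"] by simp

lemma normal_forms_add:
  assumes "x \<in> normal_forms" "y \<in> normal_forms"
  shows "x + y \<in> normal_forms"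
proof -
  obtain c S d T where fin: "finite S" "finite T"
    and x: "x = (\<Sum>k\<in>S. nf_term (c k) k)" and y: "y = (\<Sum>k\<in>T. nf_term (d k) k)"
    using assms by (auto simp: normal_forms_def)
  have extend: "(\<Sum>k\<in>S \<union> T. nf_term (if k \<in> A then e k else 0) k) = (\<Sum>k\<in>A. nf_term (e k) k)"
    if "A \<subseteq> S \<union> T" for A e
    using that fin by (intro sum.mono_neutral_cong_right) auto
  have "x + y = (\<Sum>k\<in>S \<union> T. nf_term ((if k \<in> S then c k else 0) + (if k \<in> T then d k else 0)) k)"
    by (simp add: nf_term_add sum.distrib extend x y)
  then show ?thesis
    using fin by (simp add: normal_formsI)
qed

lemma normal_forms_scale:
  assumes "y \<in> normal_forms"
  shows "fscale a y \<in> normal_forms"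
proof -
  obtain c S where "finite S" "y = (\<Sum>k\<in>S. nf_term (c k) k)"
    using assms by (auto simp: normal_forms_def)
  then have "finite S" "fscale a y = (\<Sum>k\<in>S. nf_term (smult a (c k)) k)"
    by (simp_all add: fscale_sum nf_term_smult)
  then show ?thesis by (simp add: normal_formsI)
qed

lemma rel_cong_normal_form_sum:
  assumes "finite I" "\<And>i. i \<in> I \<Longrightarrow> \<exists>y\<in>normal_forms. rel_cong P (f i) y"
  shows "\<exists>y\<in>normal_forms. rel_cong P (\<Sum>i\<in>I. f i) y"
  using assms
proof (induct I rule: finite_induct)
  case empty
  have "(\<Sum>k\<in>{}. nf_term 0 k) \<in> normal_forms"
    by (rule normal_formsI) simp
  then show ?case using rel_cong_refl by fastforce
next
  case (insert i I)
  then obtain y y' where "y \<in> normal_forms" "rel_cong P (\<Sum>i\<in>I. f i) y"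
    and "y' \<in> normal_forms" "rel_cong P (f i) y'"
    by blast
  with insert(1,2) show ?case
    by (intro bexI[of _ "y' + y"]) (simp_all add: rel_cong_add normal_forms_add)
qed

lemma U_fmul_std_word:
  "rel_cong P (fmul (fsingle [U]) (fsingle (std_word k)))
     (nf_term (if 0 \<le> k then 1 else pshift P (-1/2)) (k + 1))"
proof (cases "0 \<le> k")
  case True
  then have "nat (k + 1) = Suc (nat k)" by simp
  with True have "U # std_word k = std_word (k + 1)"
    by (simp add: std_word_def)
  with True show ?thesis
    by (simp add: nf_term_def polyZ_one fmul_fsingle)
next
  case False
  then have "nat (- k) = Suc (nat (- (k + 1)))" by simp
  with False have "std_word k = V # std_word (k + 1)"
    by (simp add: std_word_def)
  then have "fmul (fsingle [U]) (fsingle (std_word k))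
             = fmul (fmul (fsingle [U]) (fsingle [V])) (fsingle (std_word (k + 1)))"
    by (simp add: fmul_fsingle)
  also have "rel_cong P \<dots> (nf_term (pshift P (-1/2)) (k + 1))"
    unfolding nf_term_def by (intro rel_cong_fmul_right rel_cong_U_V) simp
  finally show ?thesis using False by simp
qed

lemma V_fmul_std_word:
  "rel_cong P (fmul (fsingle [V]) (fsingle (std_word k)))
     (nf_term (if k \<le> 0 then 1 else pshift P (1/2)) (k - 1))"
proof (cases "k \<le> 0")
  case True
  then have "nat (- (k - 1)) = Suc (nat (- k))" by simp
  with True have "V # std_word k = std_word (k - 1)"
    by (simp add: std_word_def)
  with True show ?thesis
    by (simp add: nf_term_def polyZ_one fmul_fsingle)
next
  case False
  then have "nat k = Suc (nat (k - 1))" by simp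
  with False have "std_word k = U # std_word (k - 1)"
    by (simp add: std_word_def)
  then have "fmul (fsingle [V]) (fsingle (std_word k))
             = fmul (fmul (fsingle [V]) (fsingle [U])) (fsingle (std_word (k - 1)))"
    by (simp add: fmul_fsingle)
  also have "rel_cong P \<dots> (nf_term (pshift P (1/2)) (k - 1))"
    unfolding nf_term_def by (intro rel_cong_fmul_right rel_cong_V_U) simp
  finally show ?thesis using False by simp
qed

lemma gen_fmul_std_word: "\<exists>p l. rel_cong P (fmul (fsingle [g]) (fsingle (std_word k))) (nf_term p l)"
proof (cases g)
  case Z
  then have "fmul (fsingle [g]) (fsingle (std_word k)) = nf_term [:0, 1:] k"
    by (simp add: nf_term_def polyZ_X)
  then show ?thesis by (metis rel_cong_refl)
qed (use U_fmul_std_word V_fmul_std_word in blast)+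

lemma gen_fmul_nf_term: "\<exists>y\<in>normal_forms. rel_cong P (fmul (fsingle [g]) (nf_term p k)) y"
proof -
  let ?p' = "pcompose p [:- of_int (weight [g]), 1:]"
  obtain q l where ql: "rel_cong P (fmul (fsingle [g]) (fsingle (std_word k))) (nf_term q l)"
    using gen_fmul_std_word by blast
  have "rel_cong P (fmul (fsingle [g]) (nf_term p k))
          (fmul (polyZ ?p') (fmul (fsingle [g]) (fsingle (std_word k))))"
    unfolding nf_term_def
    using rel_cong_fmul_right[OF rel_cong_fsingle_polyZ[where w = "[g]" and p = p],
        of "fsingle (std_word k)"]
    by (simp add: fmul_assoc)
  also have "rel_cong P \<dots> (fmul (polyZ ?p') (nf_term q l))"
    by (intro rel_cong_fmul_left ql) simp
  finally show ?thesis
    by (auto simp: polyZ_fmul_nf_term intro: nf_term_in_normal_forms)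
qed

lemma gen_fmul_normal_form:
  assumes "y \<in> normal_forms"
  shows "\<exists>y'\<in>normal_forms. rel_cong P (fmul (fsingle [g]) y) y'"
proof -
  obtain c S where "finite S" and y: "y = (\<Sum>k\<in>S. nf_term (c k) k)"
    using assms by (auto simp: normal_forms_def)
  then show ?thesis
    using rel_cong_normal_form_sum[OF \<open>finite S\<close> gen_fmul_nf_term]
    by (simp add: fmul_sum_right)
qed

lemma exists_normal_form_fsingle: "\<exists>y\<in>normal_forms. rel_cong P (fsingle w) y"
proof (induct w)
  case Nil
  have "fsingle [] = nf_term 1 0"
    by (simp add: nf_term_weight_0 polyZ_one fone_def)
  then show ?case by (metis nf_term_in_normal_forms rel_cong_refl)
next
  case (Cons g w)
  then obtain y where y: "y \<in> normal_forms" "rel_cong P (fsingle w) y" by blast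
  obtain y' where y': "y' \<in> normal_forms" "rel_cong P (fmul (fsingle [g]) y) y'"
    using gen_fmul_normal_form[OF y(1)] by blast
  have "fsingle (g # w) = fmul (fsingle [g]) (fsingle w)"
    by (simp add: fmul_fsingle)
  also have "rel_cong P \<dots> (fmul (fsingle [g]) y)"
    by (intro rel_cong_fmul_left y(2)) simp
  also note y'(2)
  finally show ?case using y'(1) by blast
qed

lemma exists_normal_form: "a \<in> FA \<Longrightarrow> \<exists>y\<in>normal_forms. rel_cong P a y"
proof (induct rule: FA_induct)
  case zero
  show ?case using rel_cong_normal_form_sum[of "{}"] by simp
next
  case (step a c w)
  then show ?case using exists_normal_form_fsingle[of P w]
    by (meson normal_forms_add normal_forms_scale rel_cong_add rel_cong_scale)
qed

section \<open>Twisted traces\<close>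

lemma twisted_trace_vanishes_on_rel_ideal:
  "twisted_trace P t \<tau> \<Longrightarrow> \<forall>x\<in>rel_ideal P. ev \<tau> x = 0"
  by (simp add: twisted_trace_def)

lemma twisted_trace_word_weight:
  assumes "twisted_trace P t \<tau>" "weight w \<noteq> 0"
  shows "\<tau> w = 0"
proof -
  let ?z = "fsingle [Z]" and ?w = "fsingle w"
  have "gt t ?z = ?z"
    by (rule ext) (simp add: gt_def fsingle_def)
  then have "ev \<tau> (fmul ?w ?z) = ev \<tau> (fmul ?z ?w)"
    using assms(1) unfolding twisted_trace_def by (metis FA_fsingle)
  then have "0 = ev \<tau> (fmul ?z ?w - fmul ?w ?z)"
    by (simp add: ev_diff)
  also have "\<dots> = ev \<tau> (fscale (of_int (weight w)) ?w)"
    by (rule ev_rel_cong[OF rel_cong_Z_commutator _ _ twisted_trace_vanishes_on_rel_ideal[OF assms(1)]])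
      simp_all
  finally show ?thesis
    using assms(2) by (simp add: ev_scale)
qed

lemma twisted_trace_homogeneous:
  assumes "twisted_trace P t \<tau>" "homogeneous k a" "k \<noteq> 0"
  shows "ev \<tau> a = 0"
  unfolding ev_eq_sum_supp
  using assms twisted_trace_word_weight[OF assms(1)]
  by (intro sum.neutral) (auto simp: homogeneous_def supp_def)

lemma twisted_trace_nf_term:
  "twisted_trace P t \<tau> \<Longrightarrow> ev \<tau> (nf_term p k) = (if k = 0 then ev \<tau> (polyZ p) else 0)"
  using twisted_trace_homogeneous[OF _ homogeneous_nf_term] by (auto simp: nf_term_weight_0)

lemma twisted_trace_normal_form:
  assumes "twisted_trace P t \<tau>" "finite S"
  shows "ev \<tau> (\<Sum>k\<in>S. nf_term (c k) k) = (if 0 \<in> S then ev \<tau> (polyZ (c 0)) else 0)"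
  using assms by (simp add: ev_sum twisted_trace_nf_term sum.delta)

lemma twisted_trace_eqI:
  assumes "twisted_trace P t \<tau>" "twisted_trace P t \<sigma>"
    and "\<And>n. \<tau> (replicate n Z) = \<sigma> (replicate n Z)"
  shows "\<tau> = \<sigma>"
proof
  fix w
  obtain c S where fin: "finite S" and w: "rel_cong P (fsingle w) (\<Sum>k\<in>S. nf_term (c k) k)"
    using exists_normal_form[of "fsingle w" P] by (auto simp: normal_forms_def)
  have word_value: "\<rho> w = (if 0 \<in> S then ev \<rho> (polyZ (c 0)) else 0)" if "twisted_trace P t \<rho>" for \<rho>
    using ev_rel_cong[OF w _ _ twisted_trace_vanishes_on_rel_ideal[OF that]] fin
    by (simp add: twisted_trace_normal_form[OF that] FA_sum)
  have "ev \<tau> (polyZ q) = ev \<sigma> (polyZ q)" for q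
    by (simp add: ev_polyZ assms(3))
  then show "\<tau> w = \<sigma> w"
    by (simp add: word_value[OF assms(1)] word_value[OF assms(2)])
qed

definition hankel_degenerate :: "(gen list \<Rightarrow> complex) \<Rightarrow> bool" where
  "hankel_degenerate \<tau> \<longleftrightarrow> (\<exists>p. p \<noteq> 0 \<and> (\<forall>q. ev \<tau> (polyZ (p * q)) = 0))"

lemma degenerate_if_hankel_degenerate:
  assumes tt: "twisted_trace P t \<tau>" and "hankel_degenerate \<tau>"
  shows "degenerate P \<tau>"
proof -
  obtain p where "p \<noteq> 0" and p: "\<And>q. ev \<tau> (polyZ (p * q)) = 0"
    using assms(2) by (auto simp: hankel_degenerate_def)
  have "ev \<tau> (fmul (polyZ p) b) = 0" if "b \<in> FA" for b
  proof -
    obtain c S where fin: "finite S" and b: "rel_cong P b (\<Sum>k\<in>S. nf_term (c k) k)"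
      using exists_normal_form[OF \<open>b \<in> FA\<close>, of P] by (auto simp: normal_forms_def)
    have "ev \<tau> (fmul (polyZ p) b) = ev \<tau> (\<Sum>k\<in>S. nf_term (p * c k) k)"
      using ev_rel_cong[OF rel_cong_fmul_left[OF b] _ _ twisted_trace_vanishes_on_rel_ideal[OF tt]]
        \<open>b \<in> FA\<close> fin
      by (simp add: fmul_sum_right polyZ_fmul_nf_term FA_sum)
    also have "\<dots> = 0"
      using fin p by (simp add: twisted_trace_normal_form[OF tt])
    finally show ?thesis .
  qed
  moreover have "polyZ p \<notin> rel_ideal P"
    using \<open>p \<noteq> 0\<close> by (simp add: polyZ_in_rel_ideal_iff)
  ultimately show ?thesis
    unfolding degenerate_def using FA_polyZ by blast
qed

lemma rel_cong_replicate_product: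
  assumes gh: "rel_cong P (fmul (fsingle [g]) (fsingle [h])) (polyZ Q)" and "Q \<noteq> 0"
  shows "\<exists>R. R \<noteq> 0 \<and> rel_cong P (fmul (fsingle (replicate n g)) (fsingle (replicate n h))) (polyZ R)"
proof (induct n)
  case 0
  have "fmul (fsingle []) (fsingle []) = polyZ 1"
    by (simp add: polyZ_one fone_def[symmetric])
  then show ?case by (metis one_neq_zero rel_cong_refl replicate_0)
next
  case (Suc n)
  then obtain R where "R \<noteq> 0"
    and R: "rel_cong P (fmul (fsingle (replicate n g)) (fsingle (replicate n h))) (polyZ R)"
    by blast
  let ?g = "fsingle [g]" and ?h = "fsingle [h]" and ?R' = "pcompose R [:- of_int (weight [g]), 1:]"
  have "fmul (fsingle (replicate (Suc n) g)) (fsingle (replicate (Suc n) h))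
        = fmul ?g (fmul (fmul (fsingle (replicate n g)) (fsingle (replicate n h))) ?h)"
    by (simp add: fmul_fsingle replicate_append_same)
  also have "rel_cong P \<dots> (fmul (fmul ?g (polyZ R)) ?h)"
    using rel_cong_fmul_left[OF rel_cong_fmul_right[OF R]] by (simp add: fmul_assoc)
  also have "rel_cong P \<dots> (fmul (polyZ ?R') (fmul ?g ?h))"
    using rel_cong_fmul_right[OF rel_cong_fsingle_polyZ] by (simp add: fmul_assoc)
  also have "rel_cong P \<dots> (polyZ (?R' * Q))"
    using rel_cong_fmul_left[OF gh, of "polyZ ?R'"] by (simp add: polyZ_mult)
  finally have "rel_cong P (fmul (fsingle (replicate (Suc n) g)) (fsingle (replicate (Suc n) h)))
                  (polyZ (?R' * Q))" .
  moreover have "?R' \<noteq> 0"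
    using \<open>R \<noteq> 0\<close> pcompose_eq_0[of R] by fastforce
  ultimately show ?case
    using \<open>Q \<noteq> 0\<close> by (intro exI[of _ "?R' * Q"]) simp
qed

lemma rel_cong_std_word_product:
  assumes "P \<noteq> 0"
  shows "\<exists>R. R \<noteq> 0 \<and> rel_cong P (fmul (fsingle (std_word k)) (fsingle (std_word (- k)))) (polyZ R)"
proof -
  have "pshift P c \<noteq> 0" for c
    using assms pcompose_eq_0 by (fastforce simp: pshift_def)
  moreover have "std_word k = replicate (nat k) U \<and> std_word (- k) = replicate (nat k) V
      \<or> std_word k = replicate (nat (- k)) V \<and> std_word (- k) = replicate (nat (- k)) U"
    by (cases "k = 0") (auto simp: std_word_def)
  ultimately show ?thesis
    using rel_cong_replicate_product[OF rel_cong_U_V] rel_cong_replicate_product[OF rel_cong_V_U]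
    by metis
qed

lemma twisted_trace_normal_form_fmul_std_word:
  assumes tt: "twisted_trace P t \<tau>" and "finite S" "j \<in> S"
  shows "ev \<tau> (fmul (\<Sum>k\<in>S. nf_term (c k) k) (fmul (fsingle (std_word (- j))) (polyZ q)))
         = ev \<tau> (fmul (polyZ (c j)) (fmul (fmul (fsingle (std_word j)) (fsingle (std_word (- j)))) (polyZ q)))"
proof -
  let ?b = "fmul (fsingle (std_word (- j))) (polyZ q)"
  have "homogeneous (weight (std_word (- j)) + 0) ?b"
    by (intro homogeneous_fmul homogeneous_fsingle homogeneous_polyZ)
  then have off_diagonal: "ev \<tau> (fmul (nf_term (c k) k) ?b) = 0" if "k \<noteq> j" for k
    using that twisted_trace_homogeneous[OF tt homogeneous_fmul[OF homogeneous_nf_term]] by simp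
  have "ev \<tau> (fmul (\<Sum>k\<in>S. nf_term (c k) k) ?b) = (\<Sum>k\<in>S. ev \<tau> (fmul (nf_term (c k) k) ?b))"
    unfolding fmul_sum_left by (rule ev_sum) simp
  also have "\<dots> = ev \<tau> (fmul (nf_term (c j) j) ?b)"
    using assms(2,3) off_diagonal by (simp add: sum.remove)
  finally show ?thesis
    by (simp add: nf_term_def fmul_assoc)
qed

text \<open>If \<open>a \<notin> I\<close> annihilates \<open>\<A>\<^sub>P\<close> under \<open>T\<close>, pick a nonzero component \<open>p(z) std_word j\<close>
  of its normal form and multiply by \<open>std_word (-j) q(z)\<close>: all other components have nonzero weight,
  and \<open>std_word j std_word (-j)\<close> is a nonzero polynomial \<open>R(z)\<close>, so \<open>p R\<close> is in the kernel
  of the Hankel form.\<close>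

lemma hankel_degenerate_if_degenerate:
  assumes "P \<noteq> 0" and tt: "twisted_trace P t \<tau>" and "degenerate P \<tau>"
  shows "hankel_degenerate \<tau>"
proof -
  obtain a where a: "a \<in> FA" "a \<notin> rel_ideal P" "\<And>b. b \<in> FA \<Longrightarrow> ev \<tau> (fmul a b) = 0"
    using assms(3) by (auto simp: degenerate_def)
  have I: "\<forall>x\<in>rel_ideal P. ev \<tau> x = 0"
    using twisted_trace_vanishes_on_rel_ideal[OF tt] .
  obtain c S where fin: "finite S" and y: "rel_cong P a (\<Sum>k\<in>S. nf_term (c k) k)"
    using exists_normal_form[OF a(1), of P] by (auto simp: normal_forms_def)
  have "\<exists>j\<in>S. c j \<noteq> 0"
  proof (rule ccontr)
    assume "\<not> (\<exists>j\<in>S. c j \<noteq> 0)"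
    then have "(\<Sum>k\<in>S. nf_term (c k) k) = 0" by simp
    with y a(2) show False by (simp add: rel_cong_def)
  qed
  then obtain j where j: "j \<in> S" "c j \<noteq> 0" by blast
  obtain R where "R \<noteq> 0"
    and R: "rel_cong P (fmul (fsingle (std_word j)) (fsingle (std_word (- j)))) (polyZ R)"
    using rel_cong_std_word_product[OF assms(1)] by blast
  have "ev \<tau> (polyZ (c j * R * q)) = 0" for q
  proof -
    let ?b = "fmul (fsingle (std_word (- j))) (polyZ q)"
    have "0 = ev \<tau> (fmul a ?b)"
      using a(3) by simp
    also have "\<dots> = ev \<tau> (fmul (\<Sum>k\<in>S. nf_term (c k) k) ?b)"
      using ev_rel_cong[OF rel_cong_fmul_right[OF y] _ _ I] a(1) fin by (simp add: FA_sum)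
    also have "\<dots> = ev \<tau> (fmul (polyZ (c j))
                         (fmul (fmul (fsingle (std_word j)) (fsingle (std_word (- j)))) (polyZ q)))"
      by (rule twisted_trace_normal_form_fmul_std_word[OF tt fin j(1)])
    also have "\<dots> = ev \<tau> (fmul (polyZ (c j)) (fmul (polyZ R) (polyZ q)))"
      by (rule ev_rel_cong[OF rel_cong_fmul_left[OF rel_cong_fmul_right[OF R]] _ _ I]) simp_all
    also have "\<dots> = ev \<tau> (polyZ (c j * R * q))"
      by (simp add: polyZ_mult mult.assoc)
    finally show ?thesis by simp
  qed
  moreover have "c j * R \<noteq> 0"
    using j(2) \<open>R \<noteq> 0\<close> by simp
  ultimately show ?thesis
    unfolding hankel_degenerate_def by blast
qed

lemma degenerate_iff_hankel_degenerate:
  "P \<noteq> 0 \<Longrightarrow> twisted_trace P t \<tau> \<Longrightarrow> degenerate P \<tau> \<longleftrightarrow> hankel_degenerate \<tau>"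
  using degenerate_if_hankel_degenerate hankel_degenerate_if_degenerate by blast

section \<open>The homomorphism \<open>\<phi>\<^sub>Q\<^sub>1\<^sub>,\<^sub>Q\<^sub>2\<close>\<close>

lemma phiw_Nil [simp]: "phiw Q1 Q2 [] = fone"
  by (simp add: phiw_def)

lemma phiw_append: "phiw Q1 Q2 (x @ y) = fmul (phiw Q1 Q2 x) (phiw Q1 Q2 y)"
  by (induct x) (simp_all add: phiw_def fmul_assoc)

lemma phiw_single [simp]: "phiw Q1 Q2 [g] = phig Q1 Q2 g"
  by (simp add: phiw_def)

lemma FA_phiw [simp]: "phiw Q1 Q2 w \<in> FA"
proof (induct w)
  case (Cons g w)
  then show ?case by (cases g) (simp_all add: phiw_def)
qed simp

lemma phiw_replicate_Z: "phiw Q1 Q2 (replicate n Z) = fsingle (replicate n Z)"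
  by (induct n) (simp_all add: phiw_def fmul_fsingle fone_def)

lemma homogeneous_phiw: "homogeneous (weight w) (phiw Q1 Q2 w)"
proof (induct w)
  case Nil
  then show ?case using homogeneous_fsingle[of "[]"] by (simp add: fone_def)
next
  case (Cons g w)
  have "homogeneous (0 + weight [g]) (fmul (polyZ p) (fsingle [g]))" for p
    by (intro homogeneous_fmul homogeneous_polyZ homogeneous_fsingle)
  then have "homogeneous (weight [g]) (phig Q1 Q2 g)"
    by (cases g) (simp_all add: homogeneous_fsingle)
  from homogeneous_fmul[OF this Cons] show ?case
    by (simp add: phiw_def weight_Cons[of g w])
qed

lemma phi_eq_ev: "phi Q1 Q2 a = (\<lambda>v. ev (\<lambda>w. phiw Q1 Q2 w v) a)"
  by (simp add: phi_def ev_def)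

lemma phi_eq_sum: "phi Q1 Q2 a = (\<Sum>w\<in>supp a. fscale (a w) (phiw Q1 Q2 w))"
  by (rule ext) (simp add: phi_eq_ev ev_eq_sum_supp sum_fun_apply fscale_def)

lemma FA_phi: "a \<in> FA \<Longrightarrow> phi Q1 Q2 a \<in> FA"
  by (simp add: phi_eq_sum FA_sum)

lemma phi_fsingle [simp]: "phi Q1 Q2 (fsingle w) = phiw Q1 Q2 w"
  by (simp add: phi_eq_ev)

lemma phi_add: "a \<in> FA \<Longrightarrow> b \<in> FA \<Longrightarrow> phi Q1 Q2 (a + b) = phi Q1 Q2 a + phi Q1 Q2 b"
  by (rule ext) (simp add: phi_eq_ev ev_add)

lemma phi_diff: "a \<in> FA \<Longrightarrow> b \<in> FA \<Longrightarrow> phi Q1 Q2 (a - b) = phi Q1 Q2 a - phi Q1 Q2 b"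
  by (rule ext) (simp add: phi_eq_ev ev_diff)

lemma phi_scale: "a \<in> FA \<Longrightarrow> phi Q1 Q2 (fscale c a) = fscale c (phi Q1 Q2 a)"
  by (rule ext) (simp add: phi_eq_ev ev_scale, simp add: fscale_def)

lemma phi_fmul:
  assumes "a \<in> FA" "b \<in> FA"
  shows "phi Q1 Q2 (fmul a b) = fmul (phi Q1 Q2 a) (phi Q1 Q2 b)"
proof
  fix v
  let ?p = "phiw Q1 Q2"
  have "?p (x @ y) v = (\<Sum>i\<le>length v. ?p x (take i v) * ?p y (drop i v))" for x y
    by (simp add: phiw_append fmul_def)
  then have "phi Q1 Q2 (fmul a b) v
        = ev (\<lambda>x. ev (\<lambda>y. \<Sum>i\<le>length v. ?p x (take i v) * ?p y (drop i v)) b) a"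
    by (simp add: phi_eq_ev ev_fmul[OF assms])
  also have "\<dots> = (\<Sum>i\<le>length v. ev (\<lambda>x. ?p x (take i v)) a * ev (\<lambda>y. ?p y (drop i v)) b)"
    by (simp add: ev_functional_sum ev_functional_scale ev_functional_scale_right)
  also have "\<dots> = fmul (phi Q1 Q2 a) (phi Q1 Q2 b) v"
    by (simp add: fmul_def phi_eq_ev)
  finally show "phi Q1 Q2 (fmul a b) v = fmul (phi Q1 Q2 a) (phi Q1 Q2 b) v" .
qed

lemma phi_polyZ: "phi Q1 Q2 (polyZ p) = polyZ p"
proof
  fix v
  have "phi Q1 Q2 (polyZ p) v = ev (\<lambda>w. fsingle w v) (polyZ p)"
    by (simp add: phi_eq_ev ev_polyZ phiw_replicate_Z)
  then show "phi Q1 Q2 (polyZ p) v = polyZ p v"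
    by (simp add: ev_fsingle_functional)
qed

lemma phi_gt:
  assumes "a \<in> FA"
  shows "phi Q1 Q2 (gt t a) = gt t (phi Q1 Q2 a)"
proof
  fix v
  have fin: "finite (supp a)"
    using assms by (simp add: FA_iff_finite_supp)
  have "supp (gt t a) \<subseteq> supp a"
    by (auto simp: supp_def gt_def)
  then have "phi Q1 Q2 (gt t a) v = (\<Sum>w\<in>supp a. gt t a w * phiw Q1 Q2 w v)"
    by (simp add: phi_eq_ev ev_eq_sum_superset[OF fin])
  also have "\<dots> = (\<Sum>w\<in>supp a. a w * gt t (phiw Q1 Q2 w) v)"
  proof -
    have "gt t a w = t powi (- weight w) * a w" for w
      by (simp add: gt_eq_weight)
    moreover have "gt t (phiw Q1 Q2 w) v = t powi (- weight w) * phiw Q1 Q2 w v" for w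
      by (simp add: gt_homogeneous[OF homogeneous_phiw] fscale_def)
    ultimately show ?thesis by (simp add: mult_ac)
  qed
  also have "\<dots> = gt t (phi Q1 Q2 a) v"
    by (simp add: phi_eq_ev ev_eq_sum_supp gt_eq_weight sum_distrib_left mult_ac)
  finally show "phi Q1 Q2 (gt t a) v = gt t (phi Q1 Q2 a) v" .
qed

lemma pcompose_pshift: "pcompose (pshift p a) [:b, 1:] = pshift p (a + b)"
proof -
  have "pcompose [:a, 1:] [:b, 1:] = [:a + b, 1:]"
    by (simp add: pcompose_pCons one_pCons)
  then show ?thesis by (simp add: pshift_def pcompose_assoc[symmetric])
qed

lemma phi_rel_U_V:
  assumes "P1 * Q1 * Q2 = P2"
  shows "rel_cong P1 (phi Q1 Q2 (fmul (fsingle [U]) (fsingle [V]))) (polyZ (pshift P2 (-1/2)))"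
proof -
  let ?A = "polyZ (pshift Q1 (-1/2))" and ?u = "fsingle [U]" and ?v = "fsingle [V]"
  have "phi Q1 Q2 (fmul ?u ?v) = fmul ?A (fmul (fmul ?u (polyZ (pshift Q2 (1/2)))) ?v)"
    by (simp add: phi_fmul fmul_assoc)
  also have "rel_cong P1 \<dots> (fmul ?A (fmul (polyZ (pshift Q2 (-1/2))) (fmul ?u ?v)))"
  proof -
    have "pcompose (pshift Q2 (1/2)) [:- of_int (weight [U]), 1:] = pshift Q2 (-1/2)"
      by (simp add: pcompose_pshift weight_def)
    then show ?thesis
      using rel_cong_fmul_left[OF rel_cong_fmul_right[OF
          rel_cong_fsingle_polyZ[where w = "[U]" and p = "pshift Q2 (1/2)"]], of ?v ?A]
      by (simp add: fmul_assoc)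
  qed
  also have "rel_cong P1 \<dots> (fmul ?A (fmul (polyZ (pshift Q2 (-1/2))) (polyZ (pshift P1 (-1/2)))))"
    by (intro rel_cong_fmul_left rel_cong_U_V) simp_all
  also have "\<dots> = polyZ (pshift P2 (-1/2))"
    unfolding assms[symmetric] by (simp add: polyZ_mult pshift_def pcompose_mult algebra_simps)
  finally show ?thesis .
qed

lemma phi_rel_V_U:
  assumes "P1 * Q1 * Q2 = P2"
  shows "rel_cong P1 (phi Q1 Q2 (fmul (fsingle [V]) (fsingle [U]))) (polyZ (pshift P2 (1/2)))"
proof -
  let ?B = "polyZ (pshift Q2 (1/2))" and ?u = "fsingle [U]" and ?v = "fsingle [V]"
  have "phi Q1 Q2 (fmul ?v ?u) = fmul ?B (fmul (fmul ?v (polyZ (pshift Q1 (-1/2)))) ?u)"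
    by (simp add: phi_fmul fmul_assoc)
  also have "rel_cong P1 \<dots> (fmul ?B (fmul (polyZ (pshift Q1 (1/2))) (fmul ?v ?u)))"
  proof -
    have "pcompose (pshift Q1 (-1/2)) [:- of_int (weight [V]), 1:] = pshift Q1 (1/2)"
      by (simp add: pcompose_pshift weight_def)
    then show ?thesis
      using rel_cong_fmul_left[OF rel_cong_fmul_right[OF
          rel_cong_fsingle_polyZ[where w = "[V]" and p = "pshift Q1 (-1/2)"]], of ?u ?B]
      by (simp add: fmul_assoc)
  qed
  also have "rel_cong P1 \<dots> (fmul ?B (fmul (polyZ (pshift Q1 (1/2))) (polyZ (pshift P1 (1/2)))))"
    by (intro rel_cong_fmul_left rel_cong_V_U) simp_all
  also have "\<dots> = polyZ (pshift P2 (1/2))"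
    unfolding assms[symmetric] by (simp add: polyZ_mult pshift_def pcompose_mult algebra_simps)
  finally show ?thesis .
qed

lemma phi_rels:
  assumes "r \<in> rels P2" "P1 * Q1 * Q2 = P2"
  shows "phi Q1 Q2 r \<in> rel_ideal P1"
proof -
  let ?z = "fsingle [Z]" and ?u = "fsingle [U]" and ?v = "fsingle [V]"
  have commutator: "phi Q1 Q2 (fmul ?z (fsingle [g]) - fmul (fsingle [g]) ?z)
        = fmul (polyZ q) (fmul ?z (fsingle [g]) - fmul (fsingle [g]) ?z)"
    if "phig Q1 Q2 g = fmul (polyZ q) (fsingle [g])" for g q
    using that by (simp add: phi_diff phi_fmul fmul_diff_right fmul_fsingle_Z_polyZ flip: fmul_assoc)
  from assms(1) consider
      (ZU) "r = fmul ?z ?u - fmul ?u ?z - ?u"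
    | (ZV) "r = fmul ?z ?v - fmul ?v ?z + ?v"
    | (UV) "r = fmul ?u ?v - polyZ (pshift P2 (-1/2))"
    | (VU) "r = fmul ?v ?u - polyZ (pshift P2 (1/2))"
    by (auto simp: rels_def)
  then show ?thesis
  proof cases
    case ZU
    then have "phi Q1 Q2 r = fmul (polyZ (pshift Q1 (-1/2))) r"
      using commutator[of U] by (simp add: phi_diff fmul_diff_right)
    moreover have "r \<in> rel_ideal P1"
      using ZU by (simp add: rels_subset_rel_ideal rels_def)
    ultimately show ?thesis
      by (simp add: rel_ideal_fmul_left)
  next
    case ZV
    then have "phi Q1 Q2 r = fmul (polyZ (pshift Q2 (1/2))) r"
      using commutator[of V] by (simp add: phi_add fmul_add_right)
    moreover have "r \<in> rel_ideal P1"
      using ZV by (simp add: rels_subset_rel_ideal rels_def)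
    ultimately show ?thesis
      by (simp add: rel_ideal_fmul_left)
  next
    case UV
    then show ?thesis
      using phi_rel_U_V[OF assms(2)] by (simp add: rel_cong_def phi_diff phi_polyZ)
  next
    case VU
    then show ?thesis
      using phi_rel_V_U[OF assms(2)] by (simp add: rel_cong_def phi_diff phi_polyZ)
  qed
qed

lemma phi_rel_ideal:
  assumes "x \<in> rel_ideal P2" "P1 * Q1 * Q2 = P2"
  shows "phi Q1 Q2 x \<in> rel_ideal P1"
  using assms(1)
proof (induct rule: rel_ideal_induct)
  case (gen r a b)
  then have "phi Q1 Q2 (fmul (fmul a r) b) = fmul (fmul (phi Q1 Q2 a) (phi Q1 Q2 r)) (phi Q1 Q2 b)"
    by (simp add: phi_fmul rels_FA)
  with gen show ?case
    by (simp add: phi_rels[OF _ assms(2)] rel_ideal_fmul_left rel_ideal_fmul_right FA_phi)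
next
  case (add x y)
  then show ?case by (simp add: phi_add rel_ideal_FA rel_ideal.add)
next
  case (scale x c)
  then show ?case by (simp add: phi_scale rel_ideal_FA rel_ideal.scale)
qed (simp add: phi_eq_ev)

section \<open>Pulling back twisted traces along \<open>\<phi>\<close>\<close>

lemma ev_pull: "x \<in> FA \<Longrightarrow> ev (pull Q1 Q2 \<tau>) x = ev \<tau> (phi Q1 Q2 x)"
  by (simp add: phi_eq_sum ev_sum ev_scale pull_def ev_eq_sum_supp[of _ x] FA_sum)

lemma pull_linear: "pull Q1 Q2 (\<lambda>w. \<tau> w + c * \<sigma> w) = (\<lambda>w. pull Q1 Q2 \<tau> w + c * pull Q1 Q2 \<sigma> w)"
  by (simp only: pull_def ev_functional_add_scale)

lemma pull_replicate_Z: "pull Q1 Q2 \<tau> (replicate n Z) = \<tau> (replicate n Z)"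
  by (simp add: pull_def phiw_replicate_Z)

lemma twisted_trace_pull:
  assumes "twisted_trace P1 t \<tau>" "P1 * Q1 * Q2 = P2"
  shows "twisted_trace P2 t (pull Q1 Q2 \<tau>)"
  unfolding twisted_trace_def
proof (intro conjI ballI)
  fix x assume "x \<in> rel_ideal P2"
  then show "ev (pull Q1 Q2 \<tau>) x = 0"
    using assms phi_rel_ideal rel_ideal_FA twisted_trace_vanishes_on_rel_ideal by (simp add: ev_pull)
next
  fix a b assume ab: "a \<in> FA" "b \<in> FA"
  have "ev (pull Q1 Q2 \<tau>) (fmul a b) = ev \<tau> (fmul (phi Q1 Q2 a) (phi Q1 Q2 b))"
    using ab by (simp add: ev_pull phi_fmul)
  also have "\<dots> = ev \<tau> (fmul (gt t (phi Q1 Q2 b)) (phi Q1 Q2 a))"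
    using assms(1) ab FA_phi unfolding twisted_trace_def by blast
  also have "\<dots> = ev (pull Q1 Q2 \<tau>) (fmul (gt t b) a)"
    using ab by (simp add: ev_pull phi_fmul phi_gt FA_gt)
  finally show "ev (pull Q1 Q2 \<tau>) (fmul a b) = ev (pull Q1 Q2 \<tau>) (fmul (gt t b) a)" .
qed

lemma hankel_degenerate_pull_iff: "hankel_degenerate (pull Q1 Q2 \<tau>) \<longleftrightarrow> hankel_degenerate \<tau>"
  by (simp add: hankel_degenerate_def ev_polyZ pull_replicate_Z)

lemma stieltjes_pull: "stieltjes (pull Q1 Q2 \<tau>) = stieltjes \<tau>"
  by (simp add: stieltjes_def pull_replicate_Z)

theorem theorem3p8:
  fixes P1 P2 Q1 Q2 :: "complex poly" and t :: complex
  assumes "degree P1 > 0"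
    and "P1 * Q1 * Q2 = P2"
    and "degree P2 > 0"
    and "t \<noteq> 0"
  shows
    "(\<forall>a\<in>FA. phi Q1 Q2 a \<in> FA)
     \<and> phi Q1 Q2 (fsingle [U]) = fmul (polyZ (pshift Q1 (-1/2))) (fsingle [U])
     \<and> phi Q1 Q2 (fsingle [V]) = fmul (polyZ (pshift Q2 (1/2))) (fsingle [V])
     \<and> phi Q1 Q2 (fsingle [Z]) = fsingle [Z]
     \<and> phi Q1 Q2 fone = fone
     \<and> (\<forall>a\<in>FA. \<forall>b\<in>FA. phi Q1 Q2 (fmul a b) = fmul (phi Q1 Q2 a) (phi Q1 Q2 b))
     \<and> (\<forall>a\<in>FA. \<forall>b\<in>FA. \<forall>c. phi Q1 Q2 (a + fscale c b) = phi Q1 Q2 a + fscale c (phi Q1 Q2 b))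
     \<and> (\<forall>x\<in>rel_ideal P2. phi Q1 Q2 x \<in> rel_ideal P1)
     \<and> (\<forall>a\<in>FA. phi Q1 Q2 (gt t a) - gt t (phi Q1 Q2 a) \<in> rel_ideal P1)
     \<and> (\<forall>\<tau>. twisted_trace P1 t \<tau> \<longrightarrow> twisted_trace P2 t (pull Q1 Q2 \<tau>))
     \<and> (\<forall>\<tau> \<tau>' c. pull Q1 Q2 (\<lambda>w. \<tau> w + c * \<tau>' w)
                 = (\<lambda>w. pull Q1 Q2 \<tau> w + c * pull Q1 Q2 \<tau>' w))
     \<and> (\<forall>\<tau> \<tau>'. twisted_trace P1 t \<tau> \<longrightarrow> twisted_trace P1 t \<tau>' \<longrightarrow>
                pull Q1 Q2 \<tau> = pull Q1 Q2 \<tau>' \<longrightarrow> \<tau> = \<tau>')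
     \<and> (\<forall>\<tau>. twisted_trace P1 t \<tau> \<longrightarrow> stieltjes (pull Q1 Q2 \<tau>) = stieltjes \<tau>)
     \<and> (\<forall>\<tau>. twisted_trace P1 t \<tau> \<longrightarrow>
                (degenerate P2 (pull Q1 Q2 \<tau>) \<longleftrightarrow> degenerate P1 \<tau>))"
proof -
  have "P1 \<noteq> 0" "P2 \<noteq> 0"
    using assms(1,3) by auto
  have injective: "\<tau> = \<tau>'"
    if "twisted_trace P1 t \<tau>" "twisted_trace P1 t \<tau>'" "pull Q1 Q2 \<tau> = pull Q1 Q2 \<tau>'" for \<tau> \<tau>'
    using twisted_trace_eqI[OF that(1,2)] that(3) pull_replicate_Z by metis
  have degenerate: "degenerate P2 (pull Q1 Q2 \<tau>) \<longleftrightarrow> degenerate P1 \<tau>" if "twisted_trace P1 t \<tau>" for \<tau>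
    using degenerate_iff_hankel_degenerate[OF \<open>P2 \<noteq> 0\<close> twisted_trace_pull[OF that assms(2)]]
      degenerate_iff_hankel_degenerate[OF \<open>P1 \<noteq> 0\<close> that] hankel_degenerate_pull_iff
    by simp
  show ?thesis
    using FA_phi phi_fmul phi_rel_ideal[OF _ assms(2)] twisted_trace_pull[OF _ assms(2)]
      pull_linear injective stieltjes_pull degenerate
    by (simp add: phi_add phi_scale phi_gt fone_def)
qed

end
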